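(* Let $B$ be a finite skew brace, regarded as a q-cycle set via $a\cdot b:=\lambda_{a^-}(b)$ and $a:b:=\delta_{a^-}(b)$, and let $X$ be an indecomposable sub-q-cycle set of $B$. Then: (1) for $x\in X$, we have $B=B(x)$ if and only if $X$ is a transitive cycle base of $B$ and $\langle x\rangle = X$; (2) $B=B(x)$ for all $x\in X$ if and only if $X$ is a transitive cycle base of $B$ and $X$ is irreducible.
   Context: A skew brace is a triple $(B,+,\circ)$ where $(B,+)$ and $(B,\circ)$ are groups and $a\circ(b+c)=a\circ b-a+a\circ c$ for all $a,b,c\in B$; $-a$ and $a^-$ denote the inverses of $a$ in $(B,+)$ and $(B,\circ)$. For $a\in B$ put $\lambda_a(b):=-a+a\circ b$ and $\delta_a(b):=a\circ b-a$. A sub-skew brace is a subset that is a subgroup of both $(B,+)$ and $(B,\circ)$; $B(x)$ denotes the smallest sub-skew brace of $B$ containing $x$. A q-cycle set is a non-empty set $X$ with binary operations $\cdot$ and $:$ such that each map $\sigma_x:y\mapsto x\cdot y$ is bijective and, for all $x,y,z$: $(x\cdot y)\cdot(x\cdot z)=(y:x)\cdot(y\cdot z)$, $(x:y):(x:z)=(y\cdot x):(y:z)$, $(x\cdot y):(x\cdot z)=(y:x)\cdot(y:z)$. Write $\delta_x(y):=x:y$ (for the skew brace $B$, the q-cycle set maps are $\sigma_a=\lambda_{a^-}$ and $\delta_{a^-}$). A sub-q-cycle set is a subset that is again a q-cycle set under the restricted operations (the empty set also counts as one). For $S\subseteq X$, $\langle S\rangle$ is the intersection of all sub-q-cycle sets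 containing $S$, and $\langle x\rangle:=\langle\{x\}\rangle$. $X$ is irreducible if $\emptyset$ and $X$ are its only sub-q-cycle sets. $X$ is indecomposable if there is no partition of $X$ into two nonempty sub-q-cycle sets (for finite $X$ this is equivalent to the group generated by all $\sigma_x,\delta_x$ acting transitively on $X$). A subset $X\subseteq B$ is a cycle base of $B$ if it is a union of orbits of the subgroup of $\mathrm{Sym}(B)$ generated by $\{\lambda_a,\delta_a : a\in B\}$ and it generates $(B,+)$; it is a transitive cycle base if it is a single such orbit. *)

theory Defs
  imports "HOL-Algebra.Generated_Groups"
begin

text \<open>A skew brace is given by two group structures A = (B,+) and M = (B,\<circ>) on the
same carrier B (HOL-Algebra records; the group operation of A is the addition, written
with the multiplication symbol of A).\<close>

definition skew_brace :: "'a monoid \<Rightarrow> 'a monoid \<Rightarrow> bool" where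
  "skew_brace A M \<longleftrightarrow> group A \<and> group M \<and> carrier A = carrier M \<and>
     (\<forall>a\<in>carrier A. \<forall>b\<in>carrier A. \<forall>c\<in>carrier A.
        a \<otimes>\<^bsub>M\<^esub> (b \<otimes>\<^bsub>A\<^esub> c)
          = (a \<otimes>\<^bsub>M\<^esub> b) \<otimes>\<^bsub>A\<^esub> inv\<^bsub>A\<^esub> a \<otimes>\<^bsub>A\<^esub> (a \<otimes>\<^bsub>M\<^esub> c))"

definition blambda :: "'a monoid \<Rightarrow> 'a monoid \<Rightarrow> 'a \<Rightarrow> 'a \<Rightarrow> 'a" where
  "blambda A M a b = inv\<^bsub>A\<^esub> a \<otimes>\<^bsub>A\<^esub> (a \<otimes>\<^bsub>M\<^esub> b)"

definition bdelta :: "'a monoid \<Rightarrow> 'a monoid \<Rightarrow> 'a \<Rightarrow> 'a \<Rightarrow> 'a" where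
  "bdelta A M a b = (a \<otimes>\<^bsub>M\<^esub> b) \<otimes>\<^bsub>A\<^esub> inv\<^bsub>A\<^esub> a"

definition sub_skew_brace :: "'a monoid \<Rightarrow> 'a monoid \<Rightarrow> 'a set \<Rightarrow> bool" where
  "sub_skew_brace A M C \<longleftrightarrow> subgroup C A \<and> subgroup C M"

definition sub_skew_brace_gen :: "'a monoid \<Rightarrow> 'a monoid \<Rightarrow> 'a \<Rightarrow> 'a set" where
  "sub_skew_brace_gen A M x = \<Inter>{C. sub_skew_brace A M C \<and> x \<in> C}"

text \<open>One generating step of the action of the group generated by all lambda_a, delta_a
(a generator or the inverse of a generator).\<close>
definition cb_step :: "'a monoid \<Rightarrow> 'a monoid \<Rightarrow> ('a \<times> 'a) set" where
  "cb_step A M = {(u, v). u \<in> carrier A \<and> v \<in> carrier A \<and>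
      (\<exists>c\<in>carrier A. v = blambda A M c u \<or> v = bdelta A M c u
                   \<or> u = blambda A M c v \<or> u = bdelta A M c v)}"

definition cb_orbit :: "'a monoid \<Rightarrow> 'a monoid \<Rightarrow> 'a \<Rightarrow> 'a set" where
  "cb_orbit A M u = {v. (u, v) \<in> (cb_step A M)\<^sup>*}"

definition cycle_base :: "'a monoid \<Rightarrow> 'a monoid \<Rightarrow> 'a set \<Rightarrow> bool" where
  "cycle_base A M X \<longleftrightarrow> X \<subseteq> carrier A \<and> (\<forall>u\<in>X. cb_orbit A M u \<subseteq> X)
     \<and> generate A X = carrier A"

definition transitive_cycle_base :: "'a monoid \<Rightarrow> 'a monoid \<Rightarrow> 'a set \<Rightarrow> bool" where
  "transitive_cycle_base A M X \<longleftrightarrow> (\<exists>u\<in>carrier A. X = cb_orbit A M u)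
     \<and> generate A X = carrier A"

definition q_cycle_set :: "'a set \<Rightarrow> ('a \<Rightarrow> 'a \<Rightarrow> 'a) \<Rightarrow> ('a \<Rightarrow> 'a \<Rightarrow> 'a) \<Rightarrow> bool" where
  "q_cycle_set X dt cl \<longleftrightarrow> X \<noteq> {} \<and>
     (\<forall>x\<in>X. \<forall>y\<in>X. dt x y \<in> X \<and> cl x y \<in> X) \<and>
     (\<forall>x\<in>X. bij_betw (dt x) X X) \<and>
     (\<forall>x\<in>X. \<forall>y\<in>X. \<forall>z\<in>X.
        dt (dt x y) (dt x z) = dt (cl y x) (dt y z) \<and>
        cl (cl x y) (cl x z) = cl (dt y x) (cl y z) \<and>
        cl (dt x y) (dt x z) = dt (cl y x) (cl y z))"

definition sub_qcs :: "'a set \<Rightarrow> ('a \<Rightarrow> 'a \<Rightarrow> 'a) \<Rightarrow> ('a \<Rightarrow> 'a \<Rightarrow> 'a) \<Rightarrow> 'a set \<Rightarrow> bool" where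
  "sub_qcs X dt cl S \<longleftrightarrow> S \<subseteq> X \<and> (S = {} \<or> q_cycle_set S dt cl)"

definition qcs_gen :: "'a set \<Rightarrow> ('a \<Rightarrow> 'a \<Rightarrow> 'a) \<Rightarrow> ('a \<Rightarrow> 'a \<Rightarrow> 'a) \<Rightarrow> 'a set \<Rightarrow> 'a set" where
  "qcs_gen X dt cl S = \<Inter>{Y. sub_qcs X dt cl Y \<and> S \<subseteq> Y}"

definition qcs_irreducible :: "'a set \<Rightarrow> ('a \<Rightarrow> 'a \<Rightarrow> 'a) \<Rightarrow> ('a \<Rightarrow> 'a \<Rightarrow> 'a) \<Rightarrow> bool" where
  "qcs_irreducible X dt cl \<longleftrightarrow> q_cycle_set X dt cl \<and>
     (\<forall>Y. sub_qcs X dt cl Y \<longrightarrow> Y = {} \<or> Y = X)"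

definition qcs_indecomposable :: "'a set \<Rightarrow> ('a \<Rightarrow> 'a \<Rightarrow> 'a) \<Rightarrow> ('a \<Rightarrow> 'a \<Rightarrow> 'a) \<Rightarrow> bool" where
  "qcs_indecomposable X dt cl \<longleftrightarrow> q_cycle_set X dt cl \<and>
     \<not> (\<exists>Y Z. Y \<noteq> {} \<and> Z \<noteq> {} \<and> Y \<inter> Z = {} \<and> Y \<union> Z = X \<and>
            sub_qcs X dt cl Y \<and> sub_qcs X dt cl Z)"

definition sb_dot :: "'a monoid \<Rightarrow> 'a monoid \<Rightarrow> 'a \<Rightarrow> 'a \<Rightarrow> 'a" where
  "sb_dot A M a b = blambda A M (inv\<^bsub>M\<^esub> a) b"

definition sb_col :: "'a monoid \<Rightarrow> 'a monoid \<Rightarrow> 'a \<Rightarrow> 'a \<Rightarrow> 'a" where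
  "sb_col A M a b = bdelta A M (inv\<^bsub>M\<^esub> a) b"

end

theory Submission
  imports Defs
begin

text \<open>
  If \<open>B = B(x)\<close>, put \<open>Y = \<langle>x\<rangle>\<close>. As \<open>Y\<close> is finite and closed under \<open>\<cdot>\<close> and \<open>:\<close>, the maps
  \<open>\<lambda>\<^sub>y\<close> and \<open>\<delta>\<^sub>y\<close> permute \<open>Y\<close> for \<open>y \<in> Y\<close>, and the elements \<open>a\<close> for which \<open>\<lambda>\<^sub>a\<close> and \<open>\<delta>\<^sub>a\<close>
  permute \<open>Y\<close> form a subgroup of \<open>(B,\<circ>)\<close>. The identity
  \<open>\<lambda>\<^sub>a(y + s) = y' \<circ> \<lambda>\<^bsub>y'\<^sup>- \<circ> a\<^esub>(s)\<close> with \<open>y' = \<lambda>\<^sub>a(y) \<in> Y\<close> shows by induction that all sums of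
  elements of \<open>Y\<close> lie in this subgroup, and then \<open>s \<circ> p = s + \<lambda>\<^sub>s(p)\<close> shows that these sums
  form a sub-skew brace. It contains \<open>x\<close>, so it is \<open>B\<close>: every \<open>\<lambda>\<^sub>c\<close> and \<open>\<delta>\<^sub>c\<close> preserves \<open>Y\<close>, the
  orbit of \<open>x\<close> lies in \<open>Y \<subseteq> X\<close> and is closed in both directions under \<open>\<cdot>\<close> and \<open>:\<close>, so by
  indecomposability it is \<open>X\<close>; thus \<open>Y = X\<close>, and \<open>X\<close> generates \<open>(B,+)\<close>.

  Conversely, a sub-skew brace \<open>C \<ni> x\<close> is closed under \<open>\<cdot>\<close> and \<open>:\<close>, so \<open>C \<inter> X \<supseteq> \<langle>x\<rangle> = X\<close>,
  and \<open>C\<close> contains the additive group generated by \<open>X\<close>, which is \<open>B\<close>. Part (2) follows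
  because a finite q-cycle set is irreducible iff each of its elements generates it.
\<close>

lemma (in group) inv_mult_cancel_left [simp]:
  "\<lbrakk>x \<in> carrier G; y \<in> carrier G\<rbrakk> \<Longrightarrow> inv x \<otimes> (x \<otimes> y) = y"
  "\<lbrakk>x \<in> carrier G; y \<in> carrier G\<rbrakk> \<Longrightarrow> x \<otimes> (inv x \<otimes> y) = y"
  by (simp_all add: m_assoc[symmetric])

lemma (in group) finite_mult_closed_subgroup:
  assumes fin: "finite H" and sub: "H \<subseteq> carrier G" and one: "\<one> \<in> H"
    and mult: "\<And>a b. a \<in> H \<Longrightarrow> b \<in> H \<Longrightarrow> a \<otimes> b \<in> H"
  shows "subgroup H G"
proof (rule subgroupI[OF sub])
  show "H \<noteq> {}" using one by blast
  show "a \<otimes> b \<in> H" if "a \<in> H" "b \<in> H" for a b using mult that .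
  fix a assume a: "a \<in> H"
  have "(\<otimes>) a ` H = H"
    using a sub by (intro endo_inj_surj[OF fin]) (auto intro: mult inj_onI simp: subset_iff)
  then obtain h where h: "h \<in> H" "a \<otimes> h = \<one>" using one by (metis imageE)
  then have "inv a = h" using a sub by (metis inv_comm inv_equality subsetD)
  then show "inv a \<in> H" using h by simp
qed

inductive_set monoid_span :: "('a, 'b) monoid_scheme \<Rightarrow> 'a set \<Rightarrow> 'a set" for G S where
  one: "\<one>\<^bsub>G\<^esub> \<in> monoid_span G S"
| mult: "y \<in> S \<Longrightarrow> s \<in> monoid_span G S \<Longrightarrow> y \<otimes>\<^bsub>G\<^esub> s \<in> monoid_span G S"

context monoid
begin

lemma monoid_span_subset_carrier: "S \<subseteq> carrier G \<Longrightarrow> monoid_span G S \<subseteq> carrier G"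
proof
  show "s \<in> carrier G" if "S \<subseteq> carrier G" "s \<in> monoid_span G S" for s
    using that(2,1) by induction auto
qed

lemma monoid_span_incl: "S \<subseteq> carrier G \<Longrightarrow> y \<in> S \<Longrightarrow> y \<in> monoid_span G S"
  using monoid_span.mult[OF _ monoid_span.one, of y S G] by auto

lemma monoid_span_mult_closed:
  assumes S: "S \<subseteq> carrier G" and s: "s \<in> monoid_span G S" and t: "t \<in> monoid_span G S"
  shows "s \<otimes> t \<in> monoid_span G S"
  using s
proof induction
  case one
  then show ?case using t monoid_span_subset_carrier[OF S] by auto
next
  case (mult y s)
  then have "y \<otimes> s \<otimes> t = y \<otimes> (s \<otimes> t)"
    using S t monoid_span_subset_carrier[OF S] by (auto intro: m_assoc)
  then show ?case using monoid_span.mult[OF mult.hyps(1) mult.IH] by simp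
qed

end

lemma (in group) monoid_span_subset_generate: "monoid_span G S \<subseteq> generate G S"
proof
  show "s \<in> generate G S" if "s \<in> monoid_span G S" for s
    using that by induction (auto intro: generate.intros)
qed

section \<open>Closed subsets of q-cycle sets\<close>

definition qcs_closed :: "('a \<Rightarrow> 'a \<Rightarrow> 'a) \<Rightarrow> ('a \<Rightarrow> 'a \<Rightarrow> 'a) \<Rightarrow> 'a set \<Rightarrow> bool" where
  "qcs_closed dt cl S \<longleftrightarrow> (\<forall>x\<in>S. \<forall>y\<in>S. dt x y \<in> S \<and> cl x y \<in> S)"

lemma qcs_closed_Int:
  "qcs_closed dt cl S \<Longrightarrow> qcs_closed dt cl T \<Longrightarrow> qcs_closed dt cl (S \<inter> T)"
  unfolding qcs_closed_def by blast

lemma sub_qcs_imp_qcs_closed: "sub_qcs X dt cl S \<Longrightarrow> qcs_closed dt cl S"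
  unfolding sub_qcs_def q_cycle_set_def qcs_closed_def by blast

lemma q_cycle_set_imp_qcs_closed: "q_cycle_set X dt cl \<Longrightarrow> qcs_closed dt cl X"
  unfolding q_cycle_set_def qcs_closed_def by blast

lemma sub_qcsI:
  assumes X: "q_cycle_set X dt cl" and fin: "finite S" and SX: "S \<subseteq> X"
    and closed: "qcs_closed dt cl S"
  shows "sub_qcs X dt cl S"
proof (cases "S = {}")
  case False
  have "bij_betw (dt u) S S" if u: "u \<in> S" for u
  proof -
    have "inj_on (dt u) X" using X u SX unfolding q_cycle_set_def bij_betw_def by blast
    then have inj: "inj_on (dt u) S" using SX inj_on_subset by blast
    have "dt u ` S \<subseteq> S" using closed u unfolding qcs_closed_def by blast
    then show ?thesis using endo_inj_surj[OF fin _ inj] inj by (simp add: bij_betw_def)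
  qed
  moreover have "\<forall>x\<in>S. \<forall>y\<in>S. \<forall>z\<in>S.
        dt (dt x y) (dt x z) = dt (cl y x) (dt y z) \<and>
        cl (cl x y) (cl x z) = cl (dt y x) (cl y z) \<and>
        cl (dt x y) (dt x z) = dt (cl y x) (cl y z)"
    using X SX unfolding q_cycle_set_def by blast
  ultimately show ?thesis
    using False SX closed unfolding sub_qcs_def q_cycle_set_def qcs_closed_def by blast
qed (simp add: sub_qcs_def)

lemma qcs_gen_upper: "S \<subseteq> qcs_gen X dt cl S"
  unfolding qcs_gen_def by blast

lemma qcs_gen_subset: "q_cycle_set X dt cl \<Longrightarrow> S \<subseteq> X \<Longrightarrow> qcs_gen X dt cl S \<subseteq> X"
  unfolding qcs_gen_def sub_qcs_def by blast

lemma qcs_gen_least: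
  "sub_qcs X dt cl T \<Longrightarrow> S \<subseteq> T \<Longrightarrow> qcs_gen X dt cl S \<subseteq> T"
  unfolding qcs_gen_def by blast

lemma qcs_closed_Inter: "(\<And>T. T \<in> \<T> \<Longrightarrow> qcs_closed dt cl T) \<Longrightarrow> qcs_closed dt cl (\<Inter>\<T>)"
  unfolding qcs_closed_def by blast

lemma qcs_closed_qcs_gen: "qcs_closed dt cl (qcs_gen X dt cl S)"
  unfolding qcs_gen_def by (rule qcs_closed_Inter) (blast intro: sub_qcs_imp_qcs_closed)

lemma sub_qcs_qcs_gen:
  "q_cycle_set X dt cl \<Longrightarrow> finite X \<Longrightarrow> S \<subseteq> X \<Longrightarrow> sub_qcs X dt cl (qcs_gen X dt cl S)"
  by (meson finite_subset qcs_closed_qcs_gen qcs_gen_subset sub_qcsI)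

lemma qcs_irreducible_iff_qcs_gen:
  assumes "finite X"
  shows "qcs_irreducible X dt cl \<longleftrightarrow> q_cycle_set X dt cl \<and> (\<forall>x\<in>X. qcs_gen X dt cl {x} = X)"
proof
  assume irr: "qcs_irreducible X dt cl"
  then have X: "q_cycle_set X dt cl" unfolding qcs_irreducible_def by blast
  have "qcs_gen X dt cl {x} = X" if x: "x \<in> X" for x
  proof -
    have "sub_qcs X dt cl (qcs_gen X dt cl {x})" using sub_qcs_qcs_gen[OF X assms] x by simp
    moreover have "qcs_gen X dt cl {x} \<noteq> {}" using qcs_gen_upper[of "{x}"] by blast
    ultimately show ?thesis using irr unfolding qcs_irreducible_def by blast
  qed
  then show "q_cycle_set X dt cl \<and> (\<forall>x\<in>X. qcs_gen X dt cl {x} = X)" using X by blast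
next
  assume "q_cycle_set X dt cl \<and> (\<forall>x\<in>X. qcs_gen X dt cl {x} = X)"
  then have X: "q_cycle_set X dt cl" and gen: "\<And>x. x \<in> X \<Longrightarrow> qcs_gen X dt cl {x} = X" by blast+
  have "Y = X" if Y: "sub_qcs X dt cl Y" and y: "y \<in> Y" for Y y
  proof -
    have "y \<in> X" using Y y unfolding sub_qcs_def by blast
    then have "X \<subseteq> Y" using qcs_gen_least[OF Y, of "{y}"] gen y by simp
    then show ?thesis using Y unfolding sub_qcs_def by blast
  qed
  then show "qcs_irreducible X dt cl" using X unfolding qcs_irreducible_def by blast
qed

lemma qcs_indecomposable_invariant_eq:
  assumes ind: "qcs_indecomposable X dt cl" and fin: "finite X"
    and SX: "S \<subseteq> X" and ne: "S \<noteq> {}"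
    and inv: "\<And>u v. u \<in> X \<Longrightarrow> v \<in> X \<Longrightarrow> (dt u v \<in> S \<longleftrightarrow> v \<in> S) \<and> (cl u v \<in> S \<longleftrightarrow> v \<in> S)"
  shows "S = X"
proof (rule ccontr)
  assume "S \<noteq> X"
  have X: "q_cycle_set X dt cl" using ind unfolding qcs_indecomposable_def by blast
  have "qcs_closed dt cl S" unfolding qcs_closed_def
  proof (intro ballI conjI)
    fix u v assume "u \<in> S" "v \<in> S"
    then show "dt u v \<in> S" "cl u v \<in> S" using inv[of u v] SX by auto
  qed
  moreover have "qcs_closed dt cl (X - S)" unfolding qcs_closed_def
  proof (intro ballI conjI)
    fix u v assume "u \<in> X - S" "v \<in> X - S"
    moreover have "dt u v \<in> X" "cl u v \<in> X"
      using q_cycle_set_imp_qcs_closed[OF X] calculation unfolding qcs_closed_def by auto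
    ultimately show "dt u v \<in> X - S" "cl u v \<in> X - S" using inv[of u v] by auto
  qed
  moreover have "finite S" "finite (X - S)" using fin SX finite_subset by auto
  ultimately have "sub_qcs X dt cl S" "sub_qcs X dt cl (X - S)"
    using sub_qcsI[OF X] SX by auto
  moreover have "X - S \<noteq> {}" "S \<inter> (X - S) = {}" "S \<union> (X - S) = X"
    using \<open>S \<noteq> X\<close> SX by auto
  ultimately have "\<exists>Y Z. Y \<noteq> {} \<and> Z \<noteq> {} \<and> Y \<inter> Z = {} \<and> Y \<union> Z = X \<and>
      sub_qcs X dt cl Y \<and> sub_qcs X dt cl Z"
    using ne by (intro exI[of _ S] exI[of _ "X - S"]) simp
  then show False using ind unfolding qcs_indecomposable_def by simp
qed

locale skew_brace_struct =
  fixes A M :: "'a monoid"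
  assumes skew_brace: "skew_brace A M"
begin

sublocale A: group A using skew_brace unfolding skew_brace_def by blast
sublocale M: group M using skew_brace unfolding skew_brace_def by blast

abbreviation lam where "lam \<equiv> blambda A M"
abbreviation del where "del \<equiv> bdelta A M"
abbreviation dot where "dot \<equiv> sb_dot A M"
abbreviation col where "col \<equiv> sb_col A M"

lemma carrier_M: "carrier M = carrier A"
  using skew_brace unfolding skew_brace_def by blast

lemma brace_distrib:
  "\<lbrakk>a \<in> carrier A; b \<in> carrier A; c \<in> carrier A\<rbrakk> \<Longrightarrow>
   a \<otimes>\<^bsub>M\<^esub> (b \<otimes>\<^bsub>A\<^esub> c) = (a \<otimes>\<^bsub>M\<^esub> b) \<otimes>\<^bsub>A\<^esub> inv\<^bsub>A\<^esub> a \<otimes>\<^bsub>A\<^esub> (a \<otimes>\<^bsub>M\<^esub> c)"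
  using skew_brace unfolding skew_brace_def by blast

lemma M_closed [simp]: "\<lbrakk>a \<in> carrier A; b \<in> carrier A\<rbrakk> \<Longrightarrow> a \<otimes>\<^bsub>M\<^esub> b \<in> carrier A"
  using M.m_closed carrier_M by blast

lemma M_inv_closed [simp]: "a \<in> carrier A \<Longrightarrow> inv\<^bsub>M\<^esub> a \<in> carrier A"
  using M.inv_closed carrier_M by blast

lemma one_M: "\<one>\<^bsub>M\<^esub> = \<one>\<^bsub>A\<^esub>"
proof -
  have e: "\<one>\<^bsub>M\<^esub> \<in> carrier A" using carrier_M by force
  have "\<one>\<^bsub>A\<^esub> = \<one>\<^bsub>A\<^esub> \<otimes>\<^bsub>A\<^esub> inv\<^bsub>A\<^esub> \<one>\<^bsub>M\<^esub> \<otimes>\<^bsub>A\<^esub> \<one>\<^bsub>A\<^esub>"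
    using brace_distrib[OF e A.one_closed A.one_closed] carrier_M by simp
  then have "inv\<^bsub>A\<^esub> \<one>\<^bsub>M\<^esub> = \<one>\<^bsub>A\<^esub>" using e by simp
  then show ?thesis using A.inv_inv[OF e] by simp
qed

lemma M_one_left [simp]: "a \<in> carrier A \<Longrightarrow> \<one>\<^bsub>A\<^esub> \<otimes>\<^bsub>M\<^esub> a = a"
  using M.l_one[of a] one_M carrier_M by simp

lemma M_inv_left [simp]: "a \<in> carrier A \<Longrightarrow> inv\<^bsub>M\<^esub> a \<otimes>\<^bsub>M\<^esub> a = \<one>\<^bsub>A\<^esub>"
  using M.l_inv[of a] one_M carrier_M by simp

lemma M_inv_right [simp]: "a \<in> carrier A \<Longrightarrow> a \<otimes>\<^bsub>M\<^esub> inv\<^bsub>M\<^esub> a = \<one>\<^bsub>A\<^esub>"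
  using M.r_inv[of a] one_M carrier_M by simp

lemma M_assoc:
  "\<lbrakk>a \<in> carrier A; b \<in> carrier A; c \<in> carrier A\<rbrakk> \<Longrightarrow>
   a \<otimes>\<^bsub>M\<^esub> b \<otimes>\<^bsub>M\<^esub> c = a \<otimes>\<^bsub>M\<^esub> (b \<otimes>\<^bsub>M\<^esub> c)"
  using M.m_assoc carrier_M by simp

lemma M_eq_A_lam: "\<lbrakk>a \<in> carrier A; b \<in> carrier A\<rbrakk> \<Longrightarrow> a \<otimes>\<^bsub>M\<^esub> b = a \<otimes>\<^bsub>A\<^esub> lam a b"
  by (simp add: blambda_def)

lemma lam_closed [simp]: "\<lbrakk>a \<in> carrier A; b \<in> carrier A\<rbrakk> \<Longrightarrow> lam a b \<in> carrier A"
  by (simp add: blambda_def)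

lemma del_closed [simp]: "\<lbrakk>a \<in> carrier A; b \<in> carrier A\<rbrakk> \<Longrightarrow> del a b \<in> carrier A"
  by (simp add: bdelta_def)

lemma group_hom_lam: "a \<in> carrier A \<Longrightarrow> group_hom A A (lam a)"
  by (intro group_hom.intro group_hom_axioms.intro homI A.group_axioms)
    (simp_all add: blambda_def brace_distrib A.m_assoc)

lemma group_hom_del: "a \<in> carrier A \<Longrightarrow> group_hom A A (del a)"
  by (intro group_hom.intro group_hom_axioms.intro homI A.group_axioms)
    (simp_all add: bdelta_def brace_distrib A.m_assoc)

lemma lam_mult:
  "\<lbrakk>a \<in> carrier A; b \<in> carrier A; c \<in> carrier A\<rbrakk> \<Longrightarrow>
   lam a (b \<otimes>\<^bsub>A\<^esub> c) = lam a b \<otimes>\<^bsub>A\<^esub> lam a c"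
  using group_hom.hom_mult[OF group_hom_lam] by blast

lemma del_mult:
  "\<lbrakk>a \<in> carrier A; b \<in> carrier A; c \<in> carrier A\<rbrakk> \<Longrightarrow>
   del a (b \<otimes>\<^bsub>A\<^esub> c) = del a b \<otimes>\<^bsub>A\<^esub> del a c"
  using group_hom.hom_mult[OF group_hom_del] by blast

lemma lam_one [simp]: "a \<in> carrier A \<Longrightarrow> lam a \<one>\<^bsub>A\<^esub> = \<one>\<^bsub>A\<^esub>"
  using group_hom.hom_one[OF group_hom_lam] by blast

lemma lam_one_left [simp]: "b \<in> carrier A \<Longrightarrow> lam \<one>\<^bsub>A\<^esub> b = b"
  by (simp add: blambda_def)

lemma del_one_left [simp]: "b \<in> carrier A \<Longrightarrow> del \<one>\<^bsub>A\<^esub> b = b"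
  by (simp add: bdelta_def)

lemma lam_comp:
  assumes a: "a \<in> carrier A" and b: "b \<in> carrier A" and c: "c \<in> carrier A"
  shows "lam a (lam b c) = lam (a \<otimes>\<^bsub>M\<^esub> b) c"
proof -
  have "lam a (lam b c) = inv\<^bsub>A\<^esub> lam a b \<otimes>\<^bsub>A\<^esub> lam a (b \<otimes>\<^bsub>M\<^esub> c)"
    using a b c group_hom.hom_inv[OF group_hom_lam] by (simp add: blambda_def[of A M b] lam_mult)
  also have "\<dots> = inv\<^bsub>A\<^esub> (a \<otimes>\<^bsub>M\<^esub> b) \<otimes>\<^bsub>A\<^esub> (a \<otimes>\<^bsub>M\<^esub> b \<otimes>\<^bsub>M\<^esub> c)"
    using a b c by (simp add: blambda_def A.inv_mult_group A.m_assoc M_assoc)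
  finally show ?thesis by (simp add: blambda_def)
qed

lemma del_comp:
  assumes a: "a \<in> carrier A" and b: "b \<in> carrier A" and c: "c \<in> carrier A"
  shows "del a (del b c) = del (a \<otimes>\<^bsub>M\<^esub> b) c"
proof -
  have "del a (del b c) = del a (b \<otimes>\<^bsub>M\<^esub> c) \<otimes>\<^bsub>A\<^esub> inv\<^bsub>A\<^esub> del a b"
    using a b c group_hom.hom_inv[OF group_hom_del] by (simp add: bdelta_def[of A M b] del_mult)
  also have "\<dots> = (a \<otimes>\<^bsub>M\<^esub> b \<otimes>\<^bsub>M\<^esub> c) \<otimes>\<^bsub>A\<^esub> inv\<^bsub>A\<^esub> (a \<otimes>\<^bsub>M\<^esub> b)"
    using a b c by (simp add: bdelta_def A.inv_mult_group A.m_assoc M_assoc)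
  finally show ?thesis by (simp add: bdelta_def)
qed

lemma lam_inv_cancel [simp]:
  "\<lbrakk>a \<in> carrier A; b \<in> carrier A\<rbrakk> \<Longrightarrow> lam (inv\<^bsub>M\<^esub> a) (lam a b) = b"
  "\<lbrakk>a \<in> carrier A; b \<in> carrier A\<rbrakk> \<Longrightarrow> lam a (lam (inv\<^bsub>M\<^esub> a) b) = b"
  by (simp_all add: lam_comp)

lemma del_inv_cancel [simp]:
  "\<lbrakk>a \<in> carrier A; b \<in> carrier A\<rbrakk> \<Longrightarrow> del (inv\<^bsub>M\<^esub> a) (del a b) = b"
  "\<lbrakk>a \<in> carrier A; b \<in> carrier A\<rbrakk> \<Longrightarrow> del a (del (inv\<^bsub>M\<^esub> a) b) = b"
  by (simp_all add: del_comp)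

lemma inj_on_lam: "a \<in> carrier A \<Longrightarrow> inj_on (lam a) (carrier A)"
  by (metis inj_onI lam_inv_cancel(1))

lemma inj_on_del: "a \<in> carrier A \<Longrightarrow> inj_on (del a) (carrier A)"
  by (metis inj_onI del_inv_cancel(1))

subsection \<open>Stabilisers of finite closed subsets\<close>

definition stab :: "'a set \<Rightarrow> 'a set" where
  "stab Y = {a \<in> carrier A. lam a ` Y = Y \<and> del a ` Y = Y}"

lemma subgroup_stab:
  assumes Y: "Y \<subseteq> carrier A"
  shows "subgroup (stab Y) M"
proof (rule M.subgroupI)
  show "stab Y \<subseteq> carrier M" unfolding stab_def carrier_M by blast
  have "lam \<one>\<^bsub>A\<^esub> ` Y = Y" "del \<one>\<^bsub>A\<^esub> ` Y = Y" using Y by (auto simp: image_iff subset_iff)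
  then show "stab Y \<noteq> {}" unfolding stab_def by blast
next
  fix a assume "a \<in> stab Y"
  then have a: "a \<in> carrier A" and "lam a ` Y = Y" "del a ` Y = Y" unfolding stab_def by blast+
  then have "lam (inv\<^bsub>M\<^esub> a) ` Y = lam (inv\<^bsub>M\<^esub> a) ` lam a ` Y"
    and "del (inv\<^bsub>M\<^esub> a) ` Y = del (inv\<^bsub>M\<^esub> a) ` del a ` Y" by simp_all
  moreover have "lam (inv\<^bsub>M\<^esub> a) ` lam a ` Y = Y" "del (inv\<^bsub>M\<^esub> a) ` del a ` Y = Y"
    using a Y by (force simp: image_image)+
  ultimately show "inv\<^bsub>M\<^esub> a \<in> stab Y" using a unfolding stab_def by simp
next
  fix a b assume "a \<in> stab Y" "b \<in> stab Y"
  moreover have "lam (a \<otimes>\<^bsub>M\<^esub> b) ` Y = lam a ` lam b ` Y"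
    and "del (a \<otimes>\<^bsub>M\<^esub> b) ` Y = del a ` del b ` Y" if "a \<in> carrier A" "b \<in> carrier A"
    using that Y by (force simp: image_image lam_comp del_comp)+
  ultimately show "a \<otimes>\<^bsub>M\<^esub> b \<in> stab Y" unfolding stab_def by simp
qed

lemma subset_stab:
  assumes fin: "finite Y" and Y: "Y \<subseteq> carrier A" and closed: "qcs_closed dot col Y"
  shows "Y \<subseteq> stab Y"
proof
  fix y assume y: "y \<in> Y"
  then have yA: "inv\<^bsub>M\<^esub> y \<in> carrier A" using Y by auto
  have "lam (inv\<^bsub>M\<^esub> y) ` Y \<subseteq> Y" "del (inv\<^bsub>M\<^esub> y) ` Y \<subseteq> Y"
    using closed y unfolding qcs_closed_def sb_dot_def sb_col_def by blast+
  moreover have "inj_on (lam (inv\<^bsub>M\<^esub> y)) Y" "inj_on (del (inv\<^bsub>M\<^esub> y)) Y"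
    using inj_on_lam[OF yA] inj_on_del[OF yA] Y by (auto intro: inj_on_subset)
  ultimately have "inv\<^bsub>M\<^esub> y \<in> stab Y"
    using yA endo_inj_surj[OF fin] unfolding stab_def by blast
  then have "inv\<^bsub>M\<^esub> (inv\<^bsub>M\<^esub> y) \<in> stab Y"
    using subgroup.m_inv_closed[OF subgroup_stab[OF Y]] by blast
  then show "y \<in> stab Y" using y Y carrier_M by auto
qed

lemma lam_monoid_span:
  assumes Y: "Y \<subseteq> carrier A" and a: "a \<in> stab Y" and s: "s \<in> monoid_span A Y"
  shows "lam a s \<in> monoid_span A Y"
  using s
proof induction
  case one
  then show ?case using a unfolding stab_def by (simp add: monoid_span.one)
next
  case (mult y s)
  have "lam a (y \<otimes>\<^bsub>A\<^esub> s) = lam a y \<otimes>\<^bsub>A\<^esub> lam a s"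
    using a mult.hyps Y A.monoid_span_subset_carrier unfolding stab_def by (blast intro: lam_mult)
  moreover have "lam a y \<in> Y" using a mult.hyps(1) unfolding stab_def by blast
  ultimately show ?case using monoid_span.mult[OF _ mult.IH] by simp
qed

lemma lam_monoid_span_stab:
  assumes Y: "Y \<subseteq> carrier A" and Ystab: "Y \<subseteq> stab Y" and s: "s \<in> monoid_span A Y"
  shows "a \<in> stab Y \<Longrightarrow> lam a s \<in> stab Y"
  using s
proof (induction arbitrary: a)
  case one
  then show ?case using subgroup.one_closed[OF subgroup_stab[OF Y]]
    unfolding stab_def one_M by simp
next
  case (mult y s)
  have sub: "subgroup (stab Y) M" using subgroup_stab[OF Y] .
  have aA: "a \<in> carrier A" using mult.prems unfolding stab_def by blast
  have sA: "s \<in> carrier A" using mult.hyps(2) A.monoid_span_subset_carrier[OF Y] by blast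
  define y' where "y' = lam a y"
  have y'Y: "y' \<in> Y" using mult.prems mult.hyps(1) unfolding stab_def y'_def by blast
  then have y'A: "y' \<in> carrier A" and y'stab: "y' \<in> stab Y" using Y Ystab by blast+
  have "inv\<^bsub>M\<^esub> y' \<otimes>\<^bsub>M\<^esub> a \<in> stab Y"
    using sub mult.prems y'stab by (blast intro: subgroup.m_closed subgroup.m_inv_closed)
  then have IH: "lam (inv\<^bsub>M\<^esub> y' \<otimes>\<^bsub>M\<^esub> a) s \<in> stab Y" by (rule mult.IH)
  have "lam a (y \<otimes>\<^bsub>A\<^esub> s) = y' \<otimes>\<^bsub>A\<^esub> lam a s"
    using aA sA mult.hyps(1) Y by (auto simp: y'_def lam_mult)
  also have "\<dots> = y' \<otimes>\<^bsub>M\<^esub> lam (inv\<^bsub>M\<^esub> y') (lam a s)"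
    using y'A aA sA by (simp add: M_eq_A_lam)
  also have "\<dots> = y' \<otimes>\<^bsub>M\<^esub> lam (inv\<^bsub>M\<^esub> y' \<otimes>\<^bsub>M\<^esub> a) s"
    using y'A aA sA by (simp add: lam_comp)
  finally show ?case using subgroup.m_closed[OF sub y'stab IH] by simp
qed

lemma monoid_span_subset_stab:
  assumes Y: "Y \<subseteq> carrier A" and Ystab: "Y \<subseteq> stab Y"
  shows "monoid_span A Y \<subseteq> stab Y"
proof
  fix s assume s: "s \<in> monoid_span A Y"
  have "\<one>\<^bsub>A\<^esub> \<in> stab Y" using subgroup.one_closed[OF subgroup_stab[OF Y]] by (simp add: one_M)
  then have "lam \<one>\<^bsub>A\<^esub> s \<in> stab Y" by (rule lam_monoid_span_stab[OF Y Ystab s])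
  then show "s \<in> stab Y" using s A.monoid_span_subset_carrier[OF Y] by auto
qed

lemma M_closed_monoid_span:
  assumes Y: "Y \<subseteq> carrier A" and Ystab: "Y \<subseteq> stab Y"
    and s: "s \<in> monoid_span A Y" and p: "p \<in> monoid_span A Y"
  shows "s \<otimes>\<^bsub>M\<^esub> p \<in> monoid_span A Y"
proof -
  have "s \<otimes>\<^bsub>M\<^esub> p = s \<otimes>\<^bsub>A\<^esub> lam s p"
    using s p A.monoid_span_subset_carrier[OF Y] by (blast intro: M_eq_A_lam)
  moreover have "lam s p \<in> monoid_span A Y"
    using lam_monoid_span[OF Y _ p] monoid_span_subset_stab[OF Y Ystab] s by blast
  ultimately show ?thesis using A.monoid_span_mult_closed[OF Y s] by simp
qed

lemma sub_skew_brace_monoid_span: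
  assumes fin: "finite (carrier A)" and Y: "Y \<subseteq> carrier A" and Ystab: "Y \<subseteq> stab Y"
  shows "sub_skew_brace A M (monoid_span A Y)"
proof -
  have sub: "monoid_span A Y \<subseteq> carrier A" using A.monoid_span_subset_carrier[OF Y] .
  then have "finite (monoid_span A Y)" using fin finite_subset by blast
  then show ?thesis
    unfolding sub_skew_brace_def
    using A.finite_mult_closed_subgroup M.finite_mult_closed_subgroup sub
      A.monoid_span_mult_closed[OF Y] M_closed_monoid_span[OF Y Ystab]
    by (simp add: carrier_M one_M monoid_span.one)
qed

subsection \<open>Orbits and generated sub-skew braces\<close>

lemma cb_step_lam_del:
  assumes "c \<in> carrier A" "v \<in> carrier A"
  shows "(v, lam c v) \<in> cb_step A M" "(lam c v, v) \<in> cb_step A M"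
    "(v, del c v) \<in> cb_step A M" "(del c v, v) \<in> cb_step A M"
  using assms unfolding cb_step_def by auto

lemma cb_orbit_invariant:
  assumes "c \<in> carrier A" "v \<in> carrier A"
  shows "lam c v \<in> cb_orbit A M u \<longleftrightarrow> v \<in> cb_orbit A M u"
    and "del c v \<in> cb_orbit A M u \<longleftrightarrow> v \<in> cb_orbit A M u"
  using cb_step_lam_del[OF assms] unfolding cb_orbit_def mem_Collect_eq
  by (meson rtrancl_into_rtrancl)+

lemma cb_orbit_subset:
  assumes inv: "\<And>c. c \<in> carrier A \<Longrightarrow> lam c ` S \<subseteq> S \<and> del c ` S \<subseteq> S" and u: "u \<in> S"
  shows "cb_orbit A M u \<subseteq> S"
proof
  fix v assume "v \<in> cb_orbit A M u"
  then have "(u, v) \<in> (cb_step A M)\<^sup>*" unfolding cb_orbit_def by simp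
  then show "v \<in> S"
  proof induction
    case (step w v)
    then obtain c where c: "c \<in> carrier A" and vA: "v \<in> carrier A"
      and "v = lam c w \<or> v = del c w \<or> w = lam c v \<or> w = del c v"
      unfolding cb_step_def by blast
    then consider "v = lam c w" | "v = del c w" | "v = lam (inv\<^bsub>M\<^esub> c) w" | "v = del (inv\<^bsub>M\<^esub> c) w"
      by auto
    then show ?case using inv[OF c] inv[OF M_inv_closed[OF c]] step.IH by cases blast+
  qed (rule u)
qed

lemma qcs_closed_sub_skew_brace:
  assumes "sub_skew_brace A M C"
  shows "qcs_closed dot col C"
proof -
  have CA: "subgroup C A" and CM: "subgroup C M" using assms unfolding sub_skew_brace_def by auto
  show ?thesis unfolding qcs_closed_def sb_dot_def sb_col_def blambda_def bdelta_def
    by (meson CA CM subgroup.m_closed subgroup.m_inv_closed)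
qed

lemma cb_orbit_eq_if_indecomposable:
  assumes ind: "qcs_indecomposable X dot col" and fin: "finite X" and XA: "X \<subseteq> carrier A"
    and x: "x \<in> X" and orbit: "cb_orbit A M x \<subseteq> X"
  shows "cb_orbit A M x = X"
proof (rule qcs_indecomposable_invariant_eq[OF ind fin orbit])
  show "cb_orbit A M x \<noteq> {}" unfolding cb_orbit_def by blast
  fix u v assume "u \<in> X" "v \<in> X"
  then have "inv\<^bsub>M\<^esub> u \<in> carrier A" "v \<in> carrier A" using XA by auto
  then show "(dot u v \<in> cb_orbit A M x \<longleftrightarrow> v \<in> cb_orbit A M x) \<and>
      (col u v \<in> cb_orbit A M x \<longleftrightarrow> v \<in> cb_orbit A M x)"
    using cb_orbit_invariant[of "inv\<^bsub>M\<^esub> u" v x] unfolding sb_dot_def sb_col_def by blast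
qed

lemma sub_skew_brace_gen_subset_monoid_span:
  assumes fin: "finite (carrier A)" and Y: "Y \<subseteq> carrier A"
    and closed: "qcs_closed dot col Y" and x: "x \<in> Y"
  shows "sub_skew_brace_gen A M x \<subseteq> monoid_span A Y"
proof -
  have "Y \<subseteq> stab Y" using subset_stab[OF finite_subset[OF Y fin] Y closed] .
  then have "sub_skew_brace A M (monoid_span A Y)" using sub_skew_brace_monoid_span[OF fin Y] by blast
  moreover have "x \<in> monoid_span A Y" using A.monoid_span_incl[OF Y x] .
  ultimately show ?thesis unfolding sub_skew_brace_gen_def by blast
qed

lemma transitive_cycle_base_if_sub_skew_brace_gen_eq:
  assumes fin: "finite (carrier A)" and XA: "X \<subseteq> carrier A"
    and ind: "qcs_indecomposable X dot col" and x: "x \<in> X"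
    and gen: "sub_skew_brace_gen A M x = carrier A"
  shows "transitive_cycle_base A M X \<and> qcs_gen X dot col {x} = X"
proof -
  define Y where "Y = qcs_gen X dot col {x}"
  have X: "q_cycle_set X dot col" using ind unfolding qcs_indecomposable_def by blast
  have YX: "Y \<subseteq> X" unfolding Y_def using qcs_gen_subset[OF X] x by simp
  then have YA: "Y \<subseteq> carrier A" using XA by blast
  have xY: "x \<in> Y" unfolding Y_def using qcs_gen_upper[of "{x}"] by blast
  have closed: "qcs_closed dot col Y" unfolding Y_def by (rule qcs_closed_qcs_gen)
  have span: "carrier A \<subseteq> monoid_span A Y"
    using sub_skew_brace_gen_subset_monoid_span[OF fin YA closed xY] gen by simp
  have "stab Y = carrier A"
    using monoid_span_subset_stab[OF YA subset_stab[OF finite_subset[OF YA fin] YA closed]] span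
    unfolding stab_def by blast
  then have orbit_Y: "cb_orbit A M x \<subseteq> Y"
    by (intro cb_orbit_subset[OF _ xY]) (auto simp: stab_def)
  then have orbit: "cb_orbit A M x = X"
    using cb_orbit_eq_if_indecomposable[OF ind finite_subset[OF XA fin] XA x] YX by blast
  then have "Y = X" using orbit_Y YX by blast
  moreover have "generate A X = carrier A"
    using span A.monoid_span_subset_generate A.generate_incl[OF XA] \<open>Y = X\<close> by blast
  ultimately show ?thesis unfolding transitive_cycle_base_def Y_def using orbit x XA by blast
qed

lemma sub_skew_brace_gen_eq_if_generating:
  assumes finX: "finite X" and X: "q_cycle_set X dot col" and XA: "X \<subseteq> carrier A"
    and x: "x \<in> X" and generating: "generate A X = carrier A" and gen_x: "qcs_gen X dot col {x} = X"
  shows "sub_skew_brace_gen A M x = carrier A"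
proof
  have "sub_skew_brace A M (carrier A)"
    unfolding sub_skew_brace_def using A.subgroup_self M.subgroup_self carrier_M by simp
  then show "sub_skew_brace_gen A M x \<subseteq> carrier A"
    unfolding sub_skew_brace_gen_def using x XA by blast
  show "carrier A \<subseteq> sub_skew_brace_gen A M x" unfolding sub_skew_brace_gen_def
  proof (rule Inter_greatest)
    fix C assume "C \<in> {C. sub_skew_brace A M C \<and> x \<in> C}"
    then have C: "sub_skew_brace A M C" and "x \<in> C" by simp_all
    have "qcs_closed dot col (C \<inter> X)"
      using qcs_closed_Int[OF qcs_closed_sub_skew_brace[OF C] q_cycle_set_imp_qcs_closed[OF X]] .
    then have "sub_qcs X dot col (C \<inter> X)" using sub_qcsI[OF X] finX by simp
    then have "X \<subseteq> C" using qcs_gen_least[of X dot col "C \<inter> X" "{x}"] gen_x x \<open>x \<in> C\<close> by blast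
    then have "generate A X \<subseteq> C"
      using A.generate_subgroup_incl C unfolding sub_skew_brace_def by blast
    then show "carrier A \<subseteq> C" using generating by simp
  qed
qed

end

theorem mainTheorem1:
  fixes A M :: "'a monoid" and X :: "'a set"
  assumes "skew_brace A M"
    and "finite (carrier A)"
    and "sub_qcs (carrier A) (sb_dot A M) (sb_col A M) X"
    and "qcs_indecomposable X (sb_dot A M) (sb_col A M)"
  shows "(\<forall>x\<in>X. sub_skew_brace_gen A M x = carrier A \<longleftrightarrow>
             transitive_cycle_base A M X \<and> qcs_gen X (sb_dot A M) (sb_col A M) {x} = X)
       \<and> ((\<forall>x\<in>X. sub_skew_brace_gen A M x = carrier A) \<longleftrightarrow>
             transitive_cycle_base A M X \<and> qcs_irreducible X (sb_dot A M) (sb_col A M))"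
proof -
  interpret skew_brace_struct A M by (rule skew_brace_struct.intro) (rule assms(1))
  have X: "q_cycle_set X dot col" using assms(4) unfolding qcs_indecomposable_def by blast
  then have "X \<noteq> {}" unfolding q_cycle_set_def by blast
  have XA: "X \<subseteq> carrier A" using assms(3) unfolding sub_qcs_def by blast
  then have finX: "finite X" using assms(2) by (rule finite_subset)
  have part1: "sub_skew_brace_gen A M x = carrier A \<longleftrightarrow>
      transitive_cycle_base A M X \<and> qcs_gen X dot col {x} = X" if x: "x \<in> X" for x
  proof
    assume "sub_skew_brace_gen A M x = carrier A"
    then show "transitive_cycle_base A M X \<and> qcs_gen X dot col {x} = X"
      by (rule transitive_cycle_base_if_sub_skew_brace_gen_eq[OF assms(2) XA assms(4) x])
  next
    assume "transitive_cycle_base A M X \<and> qcs_gen X dot col {x} = X"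
    then show "sub_skew_brace_gen A M x = carrier A"
      using sub_skew_brace_gen_eq_if_generating[OF finX X XA x]
      unfolding transitive_cycle_base_def by simp
  qed
  moreover have "(\<forall>x\<in>X. sub_skew_brace_gen A M x = carrier A) \<longleftrightarrow>
      transitive_cycle_base A M X \<and> qcs_irreducible X dot col"
    unfolding qcs_irreducible_iff_qcs_gen[OF finX] using part1 X \<open>X \<noteq> {}\<close> by auto
  ultimately show ?thesis by simp
qed

end
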